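(* Let $K$ be a number field, let $X\subseteq M_d(K)$ be a closed set in the linear Zariski topology, and let $D,D'\subseteq X$ be arbitrary subsets. If $DD'\subseteq X$, then also $\overline{D}\,\overline{D'}\subseteq X$.
   Context: The linear Zariski topology on $M_d(K)$ has as closed sets exactly the finite unions of vector subspaces; $\overline{D}$ is the closure of $D$ in this topology, and for sets $Y,Z$ of matrices, $YZ=\{yz: y\in Y,z\in Z\}$. *)

theory Defs
  imports "HOL-Analysis.Finite_Cartesian_Product"
begin

definition number_field_type :: "'k::field_char_0 itself \<Rightarrow> bool" where
  "number_field_type _ \<longleftrightarrow>
     (\<exists>B :: 'k set. finite B \<and>
        (\<forall>x :: 'k. \<exists>c :: 'k \<Rightarrow> rat. x = (\<Sum>b\<in>B. of_rat (c b) * b)))"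

definition msmult :: "'k::field \<Rightarrow> 'k^'n^'n \<Rightarrow> 'k^'n^'n" where
  "msmult c A = (\<chi> i j. c * A $ i $ j)"

definition mat_subspace :: "('k::field^'n^'n) set \<Rightarrow> bool" where
  "mat_subspace V \<longleftrightarrow> 0 \<in> V \<and> (\<forall>A\<in>V. \<forall>B\<in>V. A + B \<in> V)
     \<and> (\<forall>c. \<forall>A\<in>V. msmult c A \<in> V)"

definition lz_closed :: "('k::field^'n^'n) set \<Rightarrow> bool" where
  "lz_closed X \<longleftrightarrow> (\<exists>F. finite F \<and> (\<forall>V\<in>F. mat_subspace V) \<and> X = \<Union>F)"

definition lz_closure :: "('k::field^'n^'n) set \<Rightarrow> ('k^'n^'n) set" where
  "lz_closure D = \<Inter>{X. lz_closed X \<and> D \<subseteq> X}"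

definition set_mmult :: "('k::field^'n^'n) set \<Rightarrow> ('k^'n^'n) set \<Rightarrow> ('k^'n^'n) set" where
  "set_mmult Y Z = {y ** z | y z. y \<in> Y \<and> z \<in> Z}"

end

theory Submission
  imports Defs
begin

text \<open>Left and right multiplication by a fixed matrix are linear, and preimages of finite unions
  of subspaces under a linear map are again finite unions of subspaces. Hence the product set
  condition passes to the closure of each factor, one factor at a time.\<close>

definition mat_linear :: "('k::field^'n^'n \<Rightarrow> 'k^'n^'n) \<Rightarrow> bool" where
  "mat_linear f \<longleftrightarrow> (\<forall>A B. f (A + B) = f A + f B) \<and> (\<forall>c A. f (msmult c A) = msmult c (f A))
     \<and> f 0 = 0"

lemma mat_subspace_vimage:
  assumes "mat_linear f" and "mat_subspace V"
  shows "mat_subspace (f -` V)"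
  using assms unfolding mat_linear_def mat_subspace_def by auto

lemma lz_closed_vimage:
  assumes f: "mat_linear f" and X: "lz_closed X"
  shows "lz_closed (f -` X)"
proof -
  obtain F where F: "finite F" "\<forall>V\<in>F. mat_subspace V" "X = \<Union>F"
    using X unfolding lz_closed_def by blast
  have "f -` X = \<Union>((\<lambda>V. f -` V) ` F)"
    using F(3) by auto
  moreover have "\<forall>W\<in>(\<lambda>V. f -` V) ` F. mat_subspace W"
    using F(2) mat_subspace_vimage[OF f] by blast
  ultimately show ?thesis
    unfolding lz_closed_def using F(1) by blast
qed

lemma lz_closure_least: "lz_closed X \<Longrightarrow> D \<subseteq> X \<Longrightarrow> lz_closure D \<subseteq> X"
  unfolding lz_closure_def by blast

lemma mat_linear_left_mult: "mat_linear (\<lambda>A. M ** A)"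
  unfolding mat_linear_def
  by (simp add: matrix_add_ldistrib msmult_def matrix_matrix_mult_def vec_eq_iff
      sum.distrib distrib_left sum_distrib_left mult.left_commute)

lemma mat_linear_right_mult: "mat_linear (\<lambda>A. A ** M)"
  unfolding mat_linear_def
  by (simp add: msmult_def matrix_matrix_mult_def vec_eq_iff sum.distrib distrib_right
      sum_distrib_left mult.assoc)

lemma set_mmult_lz_closure_right_subset:
  assumes X: "lz_closed X" and DD': "set_mmult D D' \<subseteq> X"
  shows "set_mmult D (lz_closure D') \<subseteq> X"
proof -
  have "M ** A \<in> X" if M: "M \<in> D" and A: "A \<in> lz_closure D'" for M A
  proof -
    have "D' \<subseteq> (\<lambda>A. M ** A) -` X"
      using DD' M unfolding set_mmult_def by blast
    then have "lz_closure D' \<subseteq> (\<lambda>A. M ** A) -` X"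
      by (rule lz_closure_least[OF lz_closed_vimage[OF mat_linear_left_mult X]])
    then show ?thesis using A by blast
  qed
  then show ?thesis unfolding set_mmult_def by blast
qed

lemma set_mmult_lz_closure_left_subset:
  assumes X: "lz_closed X" and DD': "set_mmult D D' \<subseteq> X"
  shows "set_mmult (lz_closure D) D' \<subseteq> X"
proof -
  have "A ** M \<in> X" if A: "A \<in> lz_closure D" and M: "M \<in> D'" for M A
  proof -
    have "D \<subseteq> (\<lambda>A. A ** M) -` X"
      using DD' M unfolding set_mmult_def by blast
    then have "lz_closure D \<subseteq> (\<lambda>A. A ** M) -` X"
      by (rule lz_closure_least[OF lz_closed_vimage[OF mat_linear_right_mult X]])
    then show ?thesis using A by blast
  qed
  then show ?thesis unfolding set_mmult_def by blast
qed

theorem mainTheorem8: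
  fixes X D D' :: "('k::field_char_0 ^ 'n ^ 'n) set"
  assumes "number_field_type TYPE('k)"
    and "lz_closed X"
    and "D \<subseteq> X" and "D' \<subseteq> X"
    and "set_mmult D D' \<subseteq> X"
  shows "set_mmult (lz_closure D) (lz_closure D') \<subseteq> X"
  using set_mmult_lz_closure_left_subset[OF assms(2)]
    set_mmult_lz_closure_right_subset[OF assms(2) assms(5)]
  by blast

end
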